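(* For all $\vec z,\vec a\in\mathbb{C}^n$, \[ \log\!\Big(\frac{1}{|\langle \pi_{\vec z}|\pi_{\vec a}\rangle|^2}\Big)\;\le\; d_{\tan}(|\pi_{\vec z}\rangle,|\pi_{\vec a}\rangle)^2\;\le\;\frac{1}{|\langle \pi_{\vec z}|\pi_{\vec a}\rangle|^2}-1, \] with the conventions that $\log(1/0)=1/0=+\infty$ and that a summand of $d_{\tan}^2$ whose denominator vanishes equals $+\infty$.
   Context: For $\vec z\in\mathbb{C}^n$, $|\pi_{\vec z}\rangle=\bigotimes_{i=1}^n \frac{|0\rangle+z_i|1\rangle}{\sqrt{1+|z_i|^2}}$ is an $n$-qubit pure product state. The tangent distance is $d_{\tan}(|\pi_{\vec z}\rangle,|\pi_{\vec a}\rangle)=\Big(\sum_{i=1}^n\Big|\frac{z_i-a_i}{1+z_i^*a_i}\Big|^2\Big)^{1/2}$, where $z^*$ denotes complex conjugation. *)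

theory Defs
  imports "HOL-Analysis.Analysis" "HOL-Library.Extended_Real"
begin

text \<open>An n-qubit state is a vector in C^(2^n), indexed by bit strings
  b : {0..<n} -> bool (computational basis |b_0 ... b_{n-1}>).
  Vectors z in C^n are functions nat => complex, only indices i < n matter.\<close>

definition bitstrings :: "nat \<Rightarrow> (nat \<Rightarrow> bool) set" where
  "bitstrings n = ({0..<n} \<rightarrow>\<^sub>E (UNIV :: bool set))"

text \<open>Amplitudes of the product state |pi_z> = tensor_i (|0> + z_i |1>)/sqrt(1+|z_i|^2).\<close>
definition prod_state :: "nat \<Rightarrow> (nat \<Rightarrow> complex) \<Rightarrow> (nat \<Rightarrow> bool) \<Rightarrow> complex" where
  "prod_state n z b =
     (\<Prod>i<n. (if b i then z i else 1) / complex_of_real (sqrt (1 + (cmod (z i))\<^sup>2)))"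

definition braket :: "nat \<Rightarrow> ((nat \<Rightarrow> bool) \<Rightarrow> complex) \<Rightarrow> ((nat \<Rightarrow> bool) \<Rightarrow> complex) \<Rightarrow> complex" where
  "braket n psi phi = (\<Sum>b\<in>bitstrings n. cnj (psi b) * phi b)"

definition d_tan :: "nat \<Rightarrow> (nat \<Rightarrow> complex) \<Rightarrow> (nat \<Rightarrow> complex) \<Rightarrow> ereal" where
  "d_tan n z a =
     (if \<exists>i<n. 1 + cnj (z i) * a i = 0 then \<infinity>
      else ereal (sqrt (\<Sum>i<n. (cmod ((z i - a i) / (1 + cnj (z i) * a i)))\<^sup>2)))"

definition log_inv :: "real \<Rightarrow> ereal" where
  "log_inv x = (if x = 0 then \<infinity> else ereal (ln (1 / x)))"

definition inv_minus_one :: "real \<Rightarrow> ereal" where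
  "inv_minus_one x = (if x = 0 then \<infinity> else ereal (1 / x - 1))"

end

theory Submission
  imports Defs
begin

text \<open>The overlap of two product states factorizes into single-qubit overlaps, and the identity
  \<open>(1 + |z|\<^sup>2)(1 + |a|\<^sup>2) = |1 + z\<^sup>* a|\<^sup>2 + |z - a|\<^sup>2\<close> shows that each single-qubit fidelity
  equals \<open>1 / (1 + t)\<close> with \<open>t = |(z - a) / (1 + z\<^sup>* a)|\<^sup>2\<close>. Hence the inverse fidelity
  is \<open>\<Prod>(1 + t\<^sub>i)\<close> while \<open>d\<^sub>t\<^sub>a\<^sub>n\<^sup>2 = \<Sum>t\<^sub>i\<close>, and both bounds reduce to
  \<open>ln (\<Prod>(1 + t\<^sub>i)) \<le> \<Sum>t\<^sub>i \<le> \<Prod>(1 + t\<^sub>i) - 1\<close> for \<open>t\<^sub>i \<ge> 0\<close>.\<close>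

definition qubit_state :: "complex \<Rightarrow> bool \<Rightarrow> complex" where
  "qubit_state z y = (if y then z else 1) / complex_of_real (sqrt (1 + (cmod z)\<^sup>2))"

definition qubit_overlap :: "complex \<Rightarrow> complex \<Rightarrow> complex" where
  "qubit_overlap z a = (\<Sum>y\<in>UNIV. cnj (qubit_state z y) * qubit_state a y)"

lemma prod_state_eq_prod_qubit_state:
  "prod_state n z = (\<lambda>b. \<Prod>i<n. qubit_state (z i) (b i))"
  by (simp add: prod_state_def qubit_state_def fun_eq_iff)

lemma braket_product_vectors:
  fixes u v :: "nat \<Rightarrow> bool \<Rightarrow> complex"
  shows "braket n (\<lambda>b. \<Prod>i<n. u i (b i)) (\<lambda>b. \<Prod>i<n. v i (b i))
       = (\<Prod>i<n. \<Sum>y\<in>UNIV. cnj (u i y) * v i y)"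
proof -
  have "braket n (\<lambda>b. \<Prod>i<n. u i (b i)) (\<lambda>b. \<Prod>i<n. v i (b i))
      = (\<Sum>b\<in>{..<n} \<rightarrow>\<^sub>E UNIV. \<Prod>i<n. cnj (u i (b i)) * v i (b i))"
    by (simp add: braket_def bitstrings_def atLeast0LessThan cnj_prod prod.distrib)
  also have "\<dots> = (\<Prod>i<n. \<Sum>y\<in>UNIV. cnj (u i y) * v i y)"
    by (rule prod_sum_PiE[symmetric]) auto
  finally show ?thesis .
qed

lemma braket_prod_state:
  "braket n (prod_state n z) (prod_state n a) = (\<Prod>i<n. qubit_overlap (z i) (a i))"
  unfolding prod_state_eq_prod_qubit_state qubit_overlap_def by (rule braket_product_vectors)

lemma qubit_overlap_eq:
  "qubit_overlap z a
     = (1 + cnj z * a) / complex_of_real (sqrt (1 + (cmod z)\<^sup>2) * sqrt (1 + (cmod a)\<^sup>2))"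
proof -
  have "complex_of_real (sqrt (1 + (cmod w)\<^sup>2)) \<noteq> 0" for w
    by (simp add: add_nonneg_eq_0_iff)
  then show ?thesis
    by (simp add: qubit_overlap_def qubit_state_def UNIV_bool field_simps)
qed

lemma qubit_overlap_eq_0_iff: "qubit_overlap z a = 0 \<longleftrightarrow> 1 + cnj z * a = 0"
  by (simp add: qubit_overlap_eq add_nonneg_eq_0_iff)

lemma norm_one_plus_cnj_mult_sq:
  "(cmod (1 + cnj z * a))\<^sup>2 + (cmod (z - a))\<^sup>2 = (1 + (cmod z)\<^sup>2) * (1 + (cmod a)\<^sup>2)"
proof -
  have "complex_of_real ((cmod (1 + cnj z * a))\<^sup>2 + (cmod (z - a))\<^sup>2)
      = complex_of_real ((1 + (cmod z)\<^sup>2) * (1 + (cmod a)\<^sup>2))"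
    unfolding of_real_add of_real_mult of_real_1 complex_norm_square
    by (simp add: algebra_simps)
  then show ?thesis
    using of_real_eq_iff by blast
qed

lemma norm_qubit_overlap_sq:
  assumes "1 + cnj z * a \<noteq> 0"
  shows "(cmod (qubit_overlap z a))\<^sup>2 = 1 / (1 + (cmod ((z - a) / (1 + cnj z * a)))\<^sup>2)"
proof -
  have "(cmod (qubit_overlap z a))\<^sup>2
      = (cmod (1 + cnj z * a))\<^sup>2 / ((1 + (cmod z)\<^sup>2) * (1 + (cmod a)\<^sup>2))"
    by (simp add: qubit_overlap_eq norm_divide power_divide power_mult_distrib norm_mult
        del: of_real_mult)
  also have "\<dots> = 1 / (1 + (cmod ((z - a) / (1 + cnj z * a)))\<^sup>2)"
    unfolding norm_one_plus_cnj_mult_sq[symmetric] norm_divide power_divide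
    using assms by (simp add: field_simps)
  finally show ?thesis .
qed

lemma one_plus_sum_le_prod:
  fixes f :: "'a \<Rightarrow> 'b :: linordered_semidom"
  assumes "\<And>x. x \<in> A \<Longrightarrow> f x \<ge> 0"
  shows "1 + sum f A \<le> (\<Prod>x\<in>A. 1 + f x)"
  using assms
proof (induction A rule: infinite_finite_induct)
  case (insert x A)
  have "f x * 1 \<le> f x * (1 + sum f A)"
    using insert.prems by (intro mult_left_mono) (auto intro: sum_nonneg)
  then have "1 + sum f A + f x \<le> (\<Prod>x\<in>A. 1 + f x) + f x * (1 + sum f A)"
    using insert by (intro add_mono) auto
  also have "\<dots> \<le> (\<Prod>x\<in>A. 1 + f x) + f x * (\<Prod>x\<in>A. 1 + f x)"
    using insert by (intro add_left_mono mult_left_mono) auto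
  finally show ?case
    using insert.hyps by (simp add: algebra_simps)
qed simp_all

lemma ln_prod_one_plus_le_sum:
  fixes f :: "'a \<Rightarrow> real"
  assumes "\<And>x. x \<in> A \<Longrightarrow> f x \<ge> 0"
  shows "ln (\<Prod>x\<in>A. 1 + f x) \<le> sum f A"
proof -
  have "(\<Prod>x\<in>A. 1 + f x) > 0"
    using assms by (intro prod_pos) (simp add: add_pos_nonneg)
  then show ?thesis
    using ln_mono[OF prod_le_exp_sum[OF assms]] by simp
qed

theorem lemma3p5:
  fixes n :: nat and z a :: "nat \<Rightarrow> complex"
  shows "log_inv ((cmod (braket n (prod_state n z) (prod_state n a)))\<^sup>2) \<le> (d_tan n z a)\<^sup>2
       \<and> (d_tan n z a)\<^sup>2 \<le> inv_minus_one ((cmod (braket n (prod_state n z) (prod_state n a)))\<^sup>2)"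
proof (cases "\<exists>i<n. 1 + cnj (z i) * a i = 0")
  case True
  then have "braket n (prod_state n z) (prod_state n a) = 0"
    by (auto simp: braket_prod_state qubit_overlap_eq_0_iff)
  moreover have "d_tan n z a = \<infinity>"
    using True by (simp add: d_tan_def)
  ultimately show ?thesis
    by (simp add: log_inv_def inv_minus_one_def)
next
  case False
  define t where "t i = (cmod ((z i - a i) / (1 + cnj (z i) * a i)))\<^sup>2" for i
  have t_nonneg: "t i \<ge> 0" for i
    by (simp add: t_def)
  have "(cmod (braket n (prod_state n z) (prod_state n a)))\<^sup>2 = (\<Prod>i<n. 1 / (1 + t i))"
    using False by (simp add: braket_prod_state prod_norm[symmetric] prod_power_distrib
        norm_qubit_overlap_sq t_def)
  also have "\<dots> = 1 / (\<Prod>i<n. 1 + t i)"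
    by (simp add: prod_dividef)
  finally have fidelity:
    "(cmod (braket n (prod_state n z) (prod_state n a)))\<^sup>2 = 1 / (\<Prod>i<n. 1 + t i)" .
  have "(d_tan n z a)\<^sup>2 = ereal (\<Sum>i<n. t i)"
    using False t_nonneg by (simp add: d_tan_def t_def[symmetric] sum_nonneg flip: power2_eq_square)
  moreover have "1 + t i \<noteq> 0" for i
    using t_nonneg[of i] by simp
  ultimately show ?thesis
    using ln_prod_one_plus_le_sum[of "{..<n}" t] one_plus_sum_le_prod[of "{..<n}" t] t_nonneg
    by (simp add: fidelity log_inv_def inv_minus_one_def)
qed

end
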